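(* Let $p,q$ be coprime positive integers with $p\le q$ and $m$ a positive integer. Let $S=\mathbb C[X_0,\dots,X_4]/(X_0^{q-p}-X_1X_4+X_2X_3)$, graded by $\mathbb Z\times\mathbb Z/m\mathbb Z$ with $X_0$ of degree $(1,0)$, $X_1,X_2$ of degree $(-p,-1)$ and $X_3,X_4$ of degree $(q,1)$, and let $S^{G}=S_{(0,0)}$ be its degree-$(0,0)$ subring. Then (i) $S_{(-p,-1)}=S^{G}X_1+S^{G}X_2$; (ii) $S_{(q,1)}=S^{G}X_3+S^{G}X_4$.
   Context: The grading is the weight grading for the action of $G=G_0\times G_m$ on $\mathbb C^5$ given by $t\cdot(x_0,\dots,x_4)=(tx_0,t^{-p}x_1,t^{-p}x_2,t^qx_3,t^qx_4)$ for $t\in\mathbb C^*$ and $\zeta\cdot(x_0,\dots,x_4)=(x_0,\zeta^{-1}x_1,\zeta^{-1}x_2,\zeta x_3,\zeta x_4)$ for $\zeta\in\mu_m$; $S_{(0,0)}$ is the invariant ring $S^{G}$. *)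

theory Defs
  imports Complex_Main "HOL-Library.Poly_Mapping" "HOL-Number_Theory.Cong"
begin

text \<open>Polynomials in variables X_i (i :: nat) over the complex numbers, as finitely
supported maps from exponent vectors (monomials) to coefficients.
The ring C[X0,...,X4] consists of those polynomials whose monomials only involve
the variables 0..4.\<close>

type_synonym cpoly = "(nat \<Rightarrow>\<^sub>0 nat) \<Rightarrow>\<^sub>0 complex"

definition Xv :: "nat \<Rightarrow> cpoly" where
  "Xv i = Poly_Mapping.single (Poly_Mapping.single i 1) 1"

definition in_ring5 :: "cpoly \<Rightarrow> bool" where
  "in_ring5 f \<longleftrightarrow> (\<forall>\<alpha>\<in>Poly_Mapping.keys f. Poly_Mapping.keys (\<alpha> :: nat \<Rightarrow>\<^sub>0 nat) \<subseteq> {0..<5})"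

definition wdeg :: "nat \<Rightarrow> nat \<Rightarrow> (nat \<Rightarrow>\<^sub>0 nat) \<Rightarrow> int" where
  "wdeg p q \<alpha> = int (Poly_Mapping.lookup \<alpha> 0) - int p * int (Poly_Mapping.lookup \<alpha> 1 + Poly_Mapping.lookup \<alpha> 2)
                 + int q * int (Poly_Mapping.lookup \<alpha> 3 + Poly_Mapping.lookup \<alpha> 4)"

text \<open>Z/mZ-component (represented by an integer, compared mod m): X1,X2 ~ -1, X3,X4 ~ 1.\<close>
definition cdeg :: "(nat \<Rightarrow>\<^sub>0 nat) \<Rightarrow> int" where
  "cdeg \<alpha> = int (Poly_Mapping.lookup \<alpha> 3 + Poly_Mapping.lookup \<alpha> 4) - int (Poly_Mapping.lookup \<alpha> 1 + Poly_Mapping.lookup \<alpha> 2)"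

definition homog :: "nat \<Rightarrow> nat \<Rightarrow> nat \<Rightarrow> int \<times> int \<Rightarrow> cpoly \<Rightarrow> bool" where
  "homog p q m d f \<longleftrightarrow> in_ring5 f \<and>
     (\<forall>\<alpha>\<in>Poly_Mapping.keys f. wdeg p q \<alpha> = fst d \<and> [cdeg \<alpha> = snd d] (mod int m))"

definition rel :: "nat \<Rightarrow> nat \<Rightarrow> cpoly" where
  "rel p q = Xv 0 ^ (q - p) - Xv 1 * Xv 4 + Xv 2 * Xv 3"

definition in_ideal :: "nat \<Rightarrow> nat \<Rightarrow> cpoly \<Rightarrow> bool" where
  "in_ideal p q g \<longleftrightarrow> (\<exists>h. in_ring5 h \<and> g = h * rel p q)"

text \<open>Preimage in C[X0..X4] of the graded piece S_d of S = C[X0..X4]/(rel):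
  polynomials congruent modulo the ideal to a homogeneous polynomial of degree d.\<close>
definition Spre :: "nat \<Rightarrow> nat \<Rightarrow> nat \<Rightarrow> int \<times> int \<Rightarrow> cpoly set" where
  "Spre p q m d = {f. in_ring5 f \<and> (\<exists>g. homog p q m d g \<and> in_ideal p q (f - g))}"

text \<open>Preimage of S^G * Xi + S^G * Xj, where S^G = S_(0,0).\<close>
definition SG_span2 :: "nat \<Rightarrow> nat \<Rightarrow> nat \<Rightarrow> nat \<Rightarrow> nat \<Rightarrow> cpoly set" where
  "SG_span2 p q m i j = {f. in_ring5 f \<and> (\<exists>a b. a \<in> Spre p q m (0, 0) \<and> b \<in> Spre p q m (0, 0)
       \<and> in_ideal p q (f - (a * Xv i + b * Xv j)))}"

end

theory Submission
  imports Defs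
begin

text \<open>Every element of the graded piece is a sum of homogeneous monomials, so it suffices to
  write each monomial as an invariant combination of the two generators.  A monomial of degree
  \<open>(-p,-1)\<close> has negative \<open>\<int>\<close>-degree, hence contains \<open>X\<^sub>1\<close> or \<open>X\<^sub>2\<close>, and the cofactor is invariant.
  A monomial of degree \<open>(q,1)\<close> either contains \<open>X\<^sub>3\<close> or \<open>X\<^sub>4\<close>, or else its \<open>X\<^sub>0\<close>-exponent is at
  least \<open>q \<ge> q - p\<close>, and then the relation \<open>X\<^sub>0^(q-p) \<equiv> X\<^sub>1X\<^sub>4 - X\<^sub>2X\<^sub>3\<close> finishes the job.\<close>

lemma poly_mapping_monomial_closed:
  fixes f :: "'a \<Rightarrow>\<^sub>0 'b::comm_monoid_add"
  assumes "P 0" and "\<And>g h. P g \<Longrightarrow> P h \<Longrightarrow> P (g + h)"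
    and "\<And>\<alpha>. \<alpha> \<in> Poly_Mapping.keys f \<Longrightarrow> P (Poly_Mapping.single \<alpha> (Poly_Mapping.lookup f \<alpha>))"
  shows "P f"
proof -
  have "P (\<Sum>\<alpha>\<in>A. Poly_Mapping.single \<alpha> (Poly_Mapping.lookup f \<alpha>))" if "A \<subseteq> Poly_Mapping.keys f" for A
    using finite_subset[OF that finite_keys] that by (induction A rule: finite_induct) (auto intro: assms)
  moreover have "(\<Sum>\<alpha>\<in>Poly_Mapping.keys f. Poly_Mapping.single \<alpha> (Poly_Mapping.lookup f \<alpha>)) = f"
    by (rule poly_mapping_eqI) (simp add: lookup_sum lookup_single when_def in_keys_iff)
  ultimately show ?thesis by force
qed

lemma keys_add_nat:
  "Poly_Mapping.keys ((\<alpha> :: 'a \<Rightarrow>\<^sub>0 nat) + \<beta>) = Poly_Mapping.keys \<alpha> \<union> Poly_Mapping.keys \<beta>"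
  by (auto simp: in_keys_iff lookup_add)

lemma Xv_pow: "Xv i ^ n = Poly_Mapping.single (Poly_Mapping.single i n) 1"
  by (induction n) (simp_all add: Xv_def mult_single flip: single_add)

lemma wdeg_add: "wdeg p q (\<alpha> + \<beta>) = wdeg p q \<alpha> + wdeg p q \<beta>"
  by (simp add: wdeg_def lookup_add algebra_simps)

lemma cdeg_add: "cdeg (\<alpha> + \<beta>) = cdeg \<alpha> + cdeg \<beta>"
  by (simp add: cdeg_def lookup_add algebra_simps)

lemma in_ring5_0: "in_ring5 0"
  by (simp add: in_ring5_def)

lemma in_ring5_add: "in_ring5 f \<Longrightarrow> in_ring5 g \<Longrightarrow> in_ring5 (f + g)"
  using keys_add[of f g] by (auto simp: in_ring5_def)

lemma in_ring5_mult: "in_ring5 f \<Longrightarrow> in_ring5 g \<Longrightarrow> in_ring5 (f * g)"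
  using keys_mult[of f g] by (fastforce simp: in_ring5_def keys_add_nat)

lemma homog_single_iff:
  "homog p q m d (Poly_Mapping.single \<alpha> c) \<longleftrightarrow>
     c = 0 \<or> Poly_Mapping.keys \<alpha> \<subseteq> {0..<5} \<and> wdeg p q \<alpha> = fst d \<and> [cdeg \<alpha> = snd d] (mod int m)"
  by (auto simp: homog_def in_ring5_def)

lemma homog_monomial:
  "homog p q m d f \<Longrightarrow> homog p q m d (Poly_Mapping.single \<alpha> (Poly_Mapping.lookup f \<alpha>))"
  by (auto simp: homog_def in_ring5_def in_keys_iff)

lemma homog_0: "homog p q m d 0"
  by (simp add: homog_def in_ring5_0)

lemma homog_add: "homog p q m d f \<Longrightarrow> homog p q m d g \<Longrightarrow> homog p q m d (f + g)"
  using keys_add[of f g] in_ring5_add by (auto simp: homog_def)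

lemma homog_uminus: "homog p q m d f \<Longrightarrow> homog p q m d (- f)"
  by (simp add: homog_def in_ring5_def)

lemma homog_mult:
  assumes "homog p q m d f" and "homog p q m e g"
  shows "homog p q m (fst d + fst e, snd d + snd e) (f * g)"
  unfolding homog_def
proof (intro conjI ballI)
  show "in_ring5 (f * g)"
    using assms by (simp add: homog_def in_ring5_mult)
  fix \<gamma> assume "\<gamma> \<in> Poly_Mapping.keys (f * g)"
  then obtain \<alpha> \<beta> where "\<gamma> = \<alpha> + \<beta>" "\<alpha> \<in> Poly_Mapping.keys f" "\<beta> \<in> Poly_Mapping.keys g"
    using keys_mult by blast
  with assms show "wdeg p q \<gamma> = fst (fst d + fst e, snd d + snd e)"
    and "[cdeg \<gamma> = snd (fst d + fst e, snd d + snd e)] (mod int m)"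
    by (auto simp: homog_def wdeg_add cdeg_add intro: cong_add)
qed

lemma homog_single_cancel:
  assumes "homog p q m d (Poly_Mapping.single (\<beta> + \<gamma>) c)" and "homog p q m e (Poly_Mapping.single \<gamma> 1)"
  shows "homog p q m (fst d - fst e, snd d - snd e) (Poly_Mapping.single \<beta> c)"
proof (cases "c = 0")
  case False
  with assms have "[cdeg \<beta> + cdeg \<gamma> - cdeg \<gamma> = snd d - snd e] (mod int m)"
    by (intro cong_diff) (auto simp: homog_single_iff cdeg_add)
  with False assms show ?thesis
    by (auto simp: homog_single_iff wdeg_add keys_add_nat)
qed (simp add: homog_0)

lemma homog_Xv12: "i \<in> {1, 2} \<Longrightarrow> homog p q m (- int p, - 1) (Xv i)"
  by (auto simp: Xv_def homog_single_iff wdeg_def cdeg_def lookup_single when_def)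

lemma homog_Xv34: "i \<in> {3, 4} \<Longrightarrow> homog p q m (int q, 1) (Xv i)"
  by (auto simp: Xv_def homog_single_iff wdeg_def cdeg_def lookup_single when_def)

lemma diff_single_add_cancel:
  "n \<le> Poly_Mapping.lookup \<alpha> i \<Longrightarrow> \<alpha> = (\<alpha> - Poly_Mapping.single i n) + Poly_Mapping.single i (n::nat)"
  by (rule poly_mapping_eqI) (auto simp: lookup_add lookup_minus lookup_single when_def)

lemma in_ideal_0: "in_ideal p q 0"
  unfolding in_ideal_def using in_ring5_0 by force

lemma in_ideal_add:
  assumes "in_ideal p q f" and "in_ideal p q g"
  shows "in_ideal p q (f + g)"
proof -
  obtain h h' where "in_ring5 h" "f = h * rel p q" "in_ring5 h'" "g = h' * rel p q"
    using assms unfolding in_ideal_def by blast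
  then show ?thesis
    unfolding in_ideal_def by (intro exI[of _ "h + h'"]) (simp add: in_ring5_add distrib_right)
qed

lemma in_ideal_mult:
  assumes "in_ideal p q f" and "in_ring5 g"
  shows "in_ideal p q (f * g)"
proof -
  obtain h where "in_ring5 h" "f = h * rel p q"
    using assms(1) unfolding in_ideal_def by blast
  with assms(2) show ?thesis
    unfolding in_ideal_def by (intro exI[of _ "h * g"]) (simp add: in_ring5_mult mult_ac)
qed

lemma in_ideal_rel_multiple: "in_ring5 h \<Longrightarrow> in_ideal p q (h * rel p q)"
  unfolding in_ideal_def by blast

text \<open>A homogeneous-coefficient form of \<^const>\<open>SG_span2\<close>, closed under sums and hence
  checkable monomial by monomial.\<close>

definition SG_comb :: "nat \<Rightarrow> nat \<Rightarrow> nat \<Rightarrow> nat \<Rightarrow> nat \<Rightarrow> cpoly \<Rightarrow> bool" where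
  "SG_comb p q m i j g \<longleftrightarrow> (\<exists>a b h. homog p q m (0, 0) a \<and> homog p q m (0, 0) b \<and> in_ring5 h \<and>
     g = a * Xv i + b * Xv j + h * rel p q)"

lemma SG_comb_0: "SG_comb p q m i j 0"
  unfolding SG_comb_def using homog_0 in_ring5_0 by force

lemma SG_comb_add:
  assumes "SG_comb p q m i j f" and "SG_comb p q m i j g"
  shows "SG_comb p q m i j (f + g)"
proof -
  obtain a b h where f: "homog p q m (0, 0) a" "homog p q m (0, 0) b" "in_ring5 h"
      "f = a * Xv i + b * Xv j + h * rel p q"
    using assms(1) unfolding SG_comb_def by blast
  obtain a' b' h' where g: "homog p q m (0, 0) a'" "homog p q m (0, 0) b'" "in_ring5 h'"
      "g = a' * Xv i + b' * Xv j + h' * rel p q"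
    using assms(2) unfolding SG_comb_def by blast
  have "f + g = (a + a') * Xv i + (b + b') * Xv j + (h + h') * rel p q"
    by (simp add: f(4) g(4) algebra_simps)
  with f g show ?thesis
    unfolding SG_comb_def by (blast intro: homog_add in_ring5_add)
qed

lemma SG_comb_generator:
  assumes "homog p q m (0, 0) a" and "k \<in> {i, j}"
  shows "SG_comb p q m i j (a * Xv k)"
  using assms homog_0 in_ring5_0 unfolding SG_comb_def by force

lemma SG_comb_monomial_divisible:
  assumes "homog p q m d (Poly_Mapping.single \<alpha> c)" and "homog p q m d (Xv k)"
    and "k \<in> {i, j}" and "0 < Poly_Mapping.lookup \<alpha> k"
  shows "SG_comb p q m i j (Poly_Mapping.single \<alpha> c)"
proof -
  define \<beta> where "\<beta> = \<alpha> - Poly_Mapping.single k 1"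
  have \<alpha>: "\<alpha> = \<beta> + Poly_Mapping.single k 1"
    unfolding \<beta>_def using assms(4) by (intro diff_single_add_cancel) simp
  have "homog p q m (0, 0) (Poly_Mapping.single \<beta> c)"
    using homog_single_cancel[OF assms(1)[unfolded \<alpha>] assms(2)[unfolded Xv_def]] by simp
  moreover have "Poly_Mapping.single \<alpha> c = Poly_Mapping.single \<beta> c * Xv k"
    by (simp add: \<alpha> Xv_def mult_single)
  ultimately show ?thesis
    using SG_comb_generator assms(3) by metis
qed

lemma SG_comb_X12_monomial:
  assumes "0 < p" and "homog p q m (- int p, - 1) (Poly_Mapping.single \<alpha> c)"
  shows "SG_comb p q m 1 2 (Poly_Mapping.single \<alpha> c)"
proof (cases "c = 0")
  case False
  with assms have "wdeg p q \<alpha> < 0"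
    by (simp add: homog_single_iff)
  then have "0 < Poly_Mapping.lookup \<alpha> 1 \<or> 0 < Poly_Mapping.lookup \<alpha> 2"
  proof (rule contrapos_pp)
    assume "\<not> (0 < Poly_Mapping.lookup \<alpha> 1 \<or> 0 < Poly_Mapping.lookup \<alpha> 2)"
    then show "\<not> wdeg p q \<alpha> < 0"
      by (simp add: wdeg_def not_less add_nonneg_nonneg)
  qed
  then obtain k where "k \<in> {1, 2}" and "0 < Poly_Mapping.lookup \<alpha> k"
    by blast
  with assms(2) show ?thesis
    by (intro SG_comb_monomial_divisible[where k = k]) (auto intro: homog_Xv12)
qed (simp add: SG_comb_0)

lemma SG_comb_X34_monomial:
  assumes "p \<le> q" and \<alpha>c: "homog p q m (int q, 1) (Poly_Mapping.single \<alpha> c)"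
  shows "SG_comb p q m 3 4 (Poly_Mapping.single \<alpha> c)"
proof -
  consider "c = 0" | k where "k \<in> {3, 4}" "0 < Poly_Mapping.lookup \<alpha> k"
    | "c \<noteq> 0" "Poly_Mapping.lookup \<alpha> 3 = 0" "Poly_Mapping.lookup \<alpha> 4 = 0"
    by blast
  then show ?thesis
  proof cases
    case 1
    then show ?thesis by (simp add: SG_comb_0)
  next
    case 2
    with \<alpha>c show ?thesis
      by (intro SG_comb_monomial_divisible[where k = k]) (auto intro: homog_Xv34)
  next
    case 3
    with \<alpha>c have "int (Poly_Mapping.lookup \<alpha> 0) =
        int q + int p * (int (Poly_Mapping.lookup \<alpha> 1) + int (Poly_Mapping.lookup \<alpha> 2))"
      by (simp add: homog_single_iff wdeg_def)
    then have "q \<le> Poly_Mapping.lookup \<alpha> 0"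
      by (metis le_add1 nat_int_add of_nat_le_iff of_nat_add of_nat_mult)
    define \<beta> where "\<beta> = \<alpha> - Poly_Mapping.single 0 (q - p)"
    have \<alpha>: "\<alpha> = \<beta> + Poly_Mapping.single 0 (q - p)"
      unfolding \<beta>_def using \<open>q \<le> Poly_Mapping.lookup \<alpha> 0\<close> by (intro diff_single_add_cancel) simp
    define b where "b = Poly_Mapping.single \<beta> c"
    have "homog p q m (int (q - p), 0) (Xv 0 ^ (q - p))"
      by (simp add: Xv_pow homog_single_iff wdeg_def cdeg_def lookup_single when_def)
    from homog_single_cancel[OF \<alpha>c[unfolded \<alpha>] this[unfolded Xv_pow]]
    have b: "homog p q m (int p, 1) b"
      using assms(1) by (simp add: b_def of_nat_diff)
    have "homog p q m (0, 0) (b * Xv 1)"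
      using homog_mult[OF b homog_Xv12[of 1]] by simp
    moreover have "homog p q m (0, 0) (- (b * Xv 2))"
      using homog_uminus[OF homog_mult[OF b homog_Xv12[of 2]]] by simp
    moreover have "in_ring5 b"
      using b by (simp add: homog_def)
    moreover have "Poly_Mapping.single \<alpha> c = b * Xv 0 ^ (q - p)"
      by (simp add: \<alpha> b_def Xv_pow mult_single)
    then have "Poly_Mapping.single \<alpha> c = (- (b * Xv 2)) * Xv 3 + (b * Xv 1) * Xv 4 + b * rel p q"
      by (simp add: rel_def algebra_simps)
    ultimately show ?thesis
      unfolding SG_comb_def by blast
  qed
qed

lemma Spre_subset_SG_span2:
  assumes "\<And>\<alpha> c. homog p q m d (Poly_Mapping.single \<alpha> c) \<Longrightarrow> SG_comb p q m i j (Poly_Mapping.single \<alpha> c)"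
  shows "Spre p q m d \<subseteq> SG_span2 p q m i j"
proof
  fix f assume "f \<in> Spre p q m d"
  then obtain g where f: "in_ring5 f" and g: "homog p q m d g" and fg: "in_ideal p q (f - g)"
    unfolding Spre_def by blast
  have "SG_comb p q m i j g"
    by (rule poly_mapping_monomial_closed) (use SG_comb_0 SG_comb_add assms homog_monomial[OF g] in auto)
  then obtain a b h where ab: "homog p q m (0, 0) a" "homog p q m (0, 0) b" and h: "in_ring5 h"
      and g_eq: "g = a * Xv i + b * Xv j + h * rel p q"
    unfolding SG_comb_def by blast
  have "a \<in> Spre p q m (0, 0)" "b \<in> Spre p q m (0, 0)"
    using ab in_ideal_0 by (auto simp: Spre_def homog_def)
  moreover have "in_ideal p q (f - (a * Xv i + b * Xv j))"
    using in_ideal_add[OF fg in_ideal_rel_multiple[OF h]] by (simp add: g_eq algebra_simps)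
  ultimately show "f \<in> SG_span2 p q m i j"
    unfolding SG_span2_def using f by blast
qed

lemma SG_span2_subset_Spre:
  assumes Xi: "homog p q m d (Xv i)" and Xj: "homog p q m d (Xv j)"
  shows "SG_span2 p q m i j \<subseteq> Spre p q m d"
proof
  fix f assume "f \<in> SG_span2 p q m i j"
  then obtain a b where f: "in_ring5 f" and "a \<in> Spre p q m (0, 0)" "b \<in> Spre p q m (0, 0)"
      and fab: "in_ideal p q (f - (a * Xv i + b * Xv j))"
    unfolding SG_span2_def by blast
  then obtain a' b' where a': "homog p q m (0, 0) a'" "in_ideal p q (a - a')"
      and b': "homog p q m (0, 0) b'" "in_ideal p q (b - b')"
    unfolding Spre_def by blast
  have "homog p q m d (a' * Xv i + b' * Xv j)"
    using homog_add[OF homog_mult[OF a'(1) Xi] homog_mult[OF b'(1) Xj]] by simp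
  moreover have "in_ideal p q (f - (a' * Xv i + b' * Xv j))"
  proof -
    have "f - (a' * Xv i + b' * Xv j) = (f - (a * Xv i + b * Xv j)) + (a - a') * Xv i + (b - b') * Xv j"
      by (simp add: algebra_simps)
    moreover have "in_ring5 (Xv i)" and "in_ring5 (Xv j)"
      using Xi Xj by (simp_all add: homog_def)
    ultimately show ?thesis
      using fab a'(2) b'(2) by (simp only:) (intro in_ideal_add in_ideal_mult)
  qed
  ultimately show "f \<in> Spre p q m d"
    unfolding Spre_def using f by blast
qed

theorem lemma4p4:
  fixes p q m :: nat
  assumes "0 < p" and "0 < q" and "coprime p q" and "p \<le> q" and "0 < m"
  shows "Spre p q m (- int p, - 1) = SG_span2 p q m 1 2 \<and>
         Spre p q m (int q, 1) = SG_span2 p q m 3 4"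
proof (intro conjI equalityI)
  show "Spre p q m (- int p, - 1) \<subseteq> SG_span2 p q m 1 2"
    by (rule Spre_subset_SG_span2) (rule SG_comb_X12_monomial[OF \<open>0 < p\<close>])
  show "Spre p q m (int q, 1) \<subseteq> SG_span2 p q m 3 4"
    by (rule Spre_subset_SG_span2) (rule SG_comb_X34_monomial[OF \<open>p \<le> q\<close>])
  show "SG_span2 p q m 1 2 \<subseteq> Spre p q m (- int p, - 1)"
    by (rule SG_span2_subset_Spre) (simp_all add: homog_Xv12)
  show "SG_span2 p q m 3 4 \<subseteq> Spre p q m (int q, 1)"
    by (rule SG_span2_subset_Spre) (simp_all add: homog_Xv34)
qed

end
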